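(* The SISO tree refinement relation $\lesssim$ is reflexive and transitive on SISO trees.
   Context: Sorts: $\mathsf{S} ::= \mathtt{nat} \mid \mathtt{int} \mid \mathtt{bool} \mid \mathtt{unit}$; subsorting $\leq:$ is the least reflexive relation on sorts with $\mathtt{nat}\leq:\mathtt{int}$. Participants $\mathsf{p},\mathsf{q},\mathsf{r}$ and labels $\ell$ range over fixed sets. SISO trees are the possibly infinite terms generated coinductively by $\mathsf{W} ::= \mathtt{end} \mid \mathsf{p}?\ell(\mathsf{S}).\mathsf{W} \mid \mathsf{p}!\ell(\mathsf{S}).\mathsf{W}$ (input from / output to participant $\mathsf{p}$ of label $\ell$ with payload sort $\mathsf{S}$). $\mathrm{act}(\mathsf{W})$ is defined coinductively by $\mathrm{act}(\mathtt{end})=\emptyset$, $\mathrm{act}(\mathsf{p}?\ell(\mathsf{S}).\mathsf{W})=\{\mathsf{p}?\}\cup\mathrm{act}(\mathsf{W})$, $\mathrm{act}(\mathsf{p}!\ell(\mathsf{S}).\mathsf{W})=\{\mathsf{p}!\}\cup\mathrm{act}(\mathsf{W})$. For a participant $\mathsf{p}$, $\mathcal{A}^{(\mathsf{p})}$ ranges over nonempty finite sequences of inputs $\mathsf{q}?\ell(\mathsf{S})$ with $\mathsf{q}\neq\mathsf{p}$, and $\mathcal{B}^{(\mathsf{p})}$ over nonempty finite sequences whose elements are inputs $\mathsf{r}?\ell(\mathsf{S})$ (any $\mathsf{r}$) or outputs $\mathsf{q}!\ell(\mathsf{S})$ with $\mathsf{q}\neq\mathsf{p}$; $\mathcal{A}^{(\mathsf{p})}.\mathsf{W}$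 denotes the SISO tree obtained by prefixing $\mathsf{W}$ with the sequence. The SISO refinement $\lesssim$ is the largest relation on SISO trees closed backward under the rules: (ref-in) $\mathsf{p}?\ell(\mathsf{S}).\mathsf{W}\lesssim\mathsf{p}?\ell(\mathsf{S}').\mathsf{W}'$ if $\mathsf{S}'\leq:\mathsf{S}$ and $\mathsf{W}\lesssim\mathsf{W}'$; (ref-$\mathcal{A}$) $\mathsf{p}?\ell(\mathsf{S}).\mathsf{W}\lesssim\mathcal{A}^{(\mathsf{p})}.\mathsf{p}?\ell(\mathsf{S}').\mathsf{W}'$ if $\mathsf{S}'\leq:\mathsf{S}$, $\mathsf{W}\lesssim\mathcal{A}^{(\mathsf{p})}.\mathsf{W}'$ and $\mathrm{act}(\mathsf{W})=\mathrm{act}(\mathcal{A}^{(\mathsf{p})}.\mathsf{W}')$; (ref-out) $\mathsf{p}!\ell(\mathsf{S}).\mathsf{W}\lesssim\mathsf{p}!\ell(\mathsf{S}').\mathsf{W}'$ if $\mathsf{S}\leq:\mathsf{S}'$ and $\mathsf{W}\lesssim\mathsf{W}'$; (ref-$\mathcal{B}$) $\mathsf{p}!\ell(\mathsf{S}).\mathsf{W}\lesssim\mathcal{B}^{(\mathsf{p})}.\mathsf{p}!\ell(\mathsf{S}').\mathsf{W}'$ if $\mathsf{S}\leq:\mathsf{S}'$, $\mathsf{W}\lesssim\mathcal{B}^{(\mathsf{p})}.\mathsf{W}'$ and $\mathrm{act}(\mathsf{W})=\mathrm{act}(\mathcal{B}^{(\mathsf{p})}.\mathsf{W}')$; (ref-end)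 $\mathtt{end}\lesssim\mathtt{end}$. *)

theory Defs
  imports Main
begin

datatype srt = SNat | SInt | SBool | SUnit

definition subsort :: "srt \<Rightarrow> srt \<Rightarrow> bool" where
  "subsort S T \<longleftrightarrow> S = T \<or> (S = SNat \<and> T = SInt)"

codatatype ('p, 'l) siso =
    End
  | In 'p 'l srt "('p, 'l) siso"
  | Out 'p 'l srt "('p, 'l) siso"

datatype 'p action = AIn 'p | AOut 'p

inductive occurs :: "'p action \<Rightarrow> ('p, 'l) siso \<Rightarrow> bool" where
  occ_in_here: "occurs (AIn p) (In p l S W)"
| occ_in_later: "occurs a W \<Longrightarrow> occurs a (In p l S W)"
| occ_out_here: "occurs (AOut p) (Out p l S W)"
| occ_out_later: "occurs a W \<Longrightarrow> occurs a (Out p l S W)"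

definition act :: "('p, 'l) siso \<Rightarrow> 'p action set" where
  "act W = {a. occurs a W}"

datatype ('p, 'l) item = IIn 'p 'l srt | IOut 'p 'l srt

fun pre1 :: "('p, 'l) item \<Rightarrow> ('p, 'l) siso \<Rightarrow> ('p, 'l) siso" where
  "pre1 (IIn q l S) W = In q l S W"
| "pre1 (IOut q l S) W = Out q l S W"

definition prefix :: "('p, 'l) item list \<Rightarrow> ('p, 'l) siso \<Rightarrow> ('p, 'l) siso" where
  "prefix xs W = foldr pre1 xs W"

definition is_A :: "'p \<Rightarrow> ('p, 'l) item list \<Rightarrow> bool" where
  "is_A p xs \<longleftrightarrow> xs \<noteq> [] \<and> (\<forall>x\<in>set xs. \<exists>q l S. x = IIn q l S \<and> q \<noteq> p)"

definition is_B :: "'p \<Rightarrow> ('p, 'l) item list \<Rightarrow> bool" where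
  "is_B p xs \<longleftrightarrow> xs \<noteq> [] \<and>
     (\<forall>x\<in>set xs. (\<exists>r l S. x = IIn r l S) \<or> (\<exists>q l S. x = IOut q l S \<and> q \<noteq> p))"

coinductive refines :: "('p, 'l) siso \<Rightarrow> ('p, 'l) siso \<Rightarrow> bool" where
  ref_in: "subsort S' S \<Longrightarrow> refines W W' \<Longrightarrow> refines (In p l S W) (In p l S' W')"
| ref_A: "is_A p A \<Longrightarrow> subsort S' S \<Longrightarrow> refines W (prefix A W') \<Longrightarrow>
          act W = act (prefix A W') \<Longrightarrow>
          refines (In p l S W) (prefix A (In p l S' W'))"
| ref_out: "subsort S S' \<Longrightarrow> refines W W' \<Longrightarrow> refines (Out p l S W) (Out p l S' W')"
| ref_B: "is_B p B \<Longrightarrow> subsort S S' \<Longrightarrow> refines W (prefix B W') \<Longrightarrow>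
          act W = act (prefix B W') \<Longrightarrow>
          refines (Out p l S W) (prefix B (Out p l S' W'))"
| ref_end: "refines End End"

end

theory Submission
  imports Defs
begin

text \<open>Every tree other than \<open>End\<close> has the form \<open>x.W\<close> for a single input or output
  item \<open>x\<close>, and the four rules other than ref-end then read uniformly: \<open>x.W\<close> refines
  \<open>C.x'.V\<close> when \<open>x'\<close> refines the item \<open>x\<close>, every action of \<open>C\<close> may overtake that of \<open>x\<close>,
  and \<open>W\<close> refines \<open>C.V\<close>; the side condition on actions is automatic, since refinement
  preserves \<open>act\<close>. Reflexivity is the case of empty \<open>C\<close>. For transitivity, the key fact is
  that this shape survives refinement of a longer prefix: a refinement of \<open>C.x.W\<close>, with \<open>C\<close>
  overtaking \<open>x\<close>, has the form \<open>C'.x'.V\<close> with \<open>C'\<close> overtaking \<open>x\<close> and \<open>C.W\<close> refining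
  \<open>C'.V\<close>. This goes by induction on \<open>C\<close>: the item matching the head of \<open>C\<close> lies either
  behind \<open>x'\<close>, and is absorbed into \<open>V\<close>, or in front of it, and joins \<open>C'\<close>. Composing two
  refinements thus yields a coinductive step for the composed relation.\<close>

lemma prefix_Nil [simp]: "prefix [] W = W"
  by (simp add: prefix_def)

lemma prefix_Cons [simp]: "prefix (x # xs) W = pre1 x (prefix xs W)"
  by (simp add: prefix_def)

lemma prefix_append [simp]: "prefix (xs @ ys) W = prefix xs (prefix ys W)"
  by (simp add: prefix_def)

lemma pre1_eq_iff [simp]: "pre1 x W = pre1 y V \<longleftrightarrow> x = y \<and> W = V"
  by (cases x; cases y) auto

lemma In_eq_pre1_iff [simp]: "In p l S V = pre1 x W \<longleftrightarrow> x = IIn p l S \<and> V = W"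
  by (cases x) auto

lemma Out_eq_pre1_iff [simp]: "Out p l S V = pre1 x W \<longleftrightarrow> x = IOut p l S \<and> V = W"
  by (cases x) auto

lemma siso_End_or_pre1: "W = End \<or> (\<exists>x W'. W = pre1 x W')"
  by (cases W) (metis pre1.simps)+

lemma prefix_eq_prefix_pre1D:
  assumes "prefix xs X = prefix ys (pre1 y Z)"
  shows "(\<exists>zs. xs = ys @ y # zs \<and> Z = prefix zs X) \<or> (\<exists>zs. ys = xs @ zs \<and> X = prefix zs (pre1 y Z))"
  using assms
proof (induction xs arbitrary: ys)
  case (Cons x xs)
  show ?case
  proof (cases ys)
    case (Cons y' ys')
    with Cons.prems have "x = y'" "prefix xs X = prefix ys' (pre1 y Z)"
      by auto
    with Cons.IH[OF this(2)] \<open>ys = y' # ys'\<close> show ?thesis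
      by auto
  qed (use Cons.prems in auto)
qed auto

fun iact :: "('p, 'l) item \<Rightarrow> 'p action" where
  "iact (IIn q l S) = AIn q"
| "iact (IOut q l S) = AOut q"

lemma act_pre1 [simp]: "act (pre1 x W) = insert (iact x) (act W)"
  by (cases x) (auto simp: act_def intro: occurs.intros elim: occurs.cases)

lemma act_In [simp]: "act (In p l S W) = insert (AIn p) (act W)"
  using act_pre1[of "IIn p l S"] by simp

lemma act_Out [simp]: "act (Out p l S W) = insert (AOut p) (act W)"
  using act_pre1[of "IOut p l S"] by simp

lemma act_prefix [simp]: "act (prefix xs W) = iact ` set xs \<union> act W"
  by (induction xs) auto

text \<open>\<open>overtakes b a\<close>: an action \<open>b\<close> may be anticipated before \<open>a\<close>, as in the rules
  ref-A and ref-B.\<close>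

fun overtakes :: "'p action \<Rightarrow> 'p action \<Rightarrow> bool" where
  "overtakes (AIn q) (AIn p) \<longleftrightarrow> q \<noteq> p"
| "overtakes (AOut q) (AIn p) \<longleftrightarrow> False"
| "overtakes (AIn q) (AOut p) \<longleftrightarrow> True"
| "overtakes (AOut q) (AOut p) \<longleftrightarrow> q \<noteq> p"

definition all_overtake :: "('p, 'l) item list \<Rightarrow> 'p action \<Rightarrow> bool" where
  "all_overtake C a \<longleftrightarrow> (\<forall>y\<in>set C. overtakes (iact y) a)"

lemma is_A_iff: "is_A p A \<longleftrightarrow> A \<noteq> [] \<and> all_overtake A (AIn p)"
proof -
  have overtakes_AIn: "(\<exists>q l S. y = IIn q l S \<and> q \<noteq> p) \<longleftrightarrow> overtakes (iact y) (AIn p)" for y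
    by (cases y) auto
  show ?thesis
    unfolding is_A_def all_overtake_def by (simp only: overtakes_AIn)
qed

lemma is_B_iff: "is_B p B \<longleftrightarrow> B \<noteq> [] \<and> all_overtake B (AOut p)"
proof -
  have overtakes_AOut: "((\<exists>r l S. y = IIn r l S) \<or> (\<exists>q l S. y = IOut q l S \<and> q \<noteq> p)) \<longleftrightarrow>
      overtakes (iact y) (AOut p)" for y
    by (cases y) auto
  show ?thesis
    unfolding is_B_def all_overtake_def by (simp only: overtakes_AOut)
qed

fun item_refines :: "('p, 'l) item \<Rightarrow> ('p, 'l) item \<Rightarrow> bool" where
  "item_refines (IIn p l S) (IIn p' l' S') \<longleftrightarrow> p = p' \<and> l = l' \<and> subsort S' S"
| "item_refines (IOut p l S) (IOut p' l' S') \<longleftrightarrow> p = p' \<and> l = l' \<and> subsort S S'"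
| "item_refines _ _ \<longleftrightarrow> False"

lemma item_refines_refl: "item_refines x x"
  by (cases x) (auto simp: subsort_def)

lemma item_refines_trans: "item_refines x y \<Longrightarrow> item_refines y z \<Longrightarrow> item_refines x z"
  by (cases x; cases y; cases z) (auto simp: subsort_def)

lemma item_refines_iact: "item_refines x x' \<Longrightarrow> iact x' = iact x"
  by (cases x; cases x') auto

lemma refines_act_eq_or_heads:
  assumes "refines W V"
  shows "act W = act V \<or>
    (\<exists>x x' W' V'. W = pre1 x W' \<and> V = pre1 x' V' \<and> iact x' = iact x \<and> refines W' V')"
  using assms
proof cases
  case (ref_in S' S W' V' p l)
  then show ?thesis
    by (metis iact.simps(1) pre1.simps(1))
next
  case (ref_out S S' W' V' p l)
  then show ?thesis
    by (metis iact.simps(2) pre1.simps(2))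
qed auto

lemma refines_sym_act_eq_or_heads:
  assumes "refines W V \<or> refines V W"
  shows "act W = act V \<or>
    (\<exists>x x' W' V'. W = pre1 x W' \<and> V = pre1 x' V' \<and> iact x' = iact x \<and> (refines W' V' \<or> refines V' W'))"
  using assms refines_act_eq_or_heads by metis

text \<open>Both directions of refinement at once, so that a single induction gives both
  inclusions between the action sets.\<close>

lemma occurs_act_refines:
  assumes "occurs a W" and "refines W V \<or> refines V W"
  shows "a \<in> act V"
  using assms
proof (induction arbitrary: V)
  case (occ_in_here p l S W)
  then show ?case
    using refines_sym_act_eq_or_heads[OF occ_in_here] by auto
next
  case (occ_in_later a W p l S)
  have "a \<in> act W"
    using occ_in_later(1) by (simp add: act_def)
  then show ?case
    using refines_sym_act_eq_or_heads[OF occ_in_later(3)] occ_in_later.IH by auto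
next
  case (occ_out_here p l S W)
  then show ?case
    using refines_sym_act_eq_or_heads[OF occ_out_here] by auto
next
  case (occ_out_later a W p l S)
  have "a \<in> act W"
    using occ_out_later(1) by (simp add: act_def)
  then show ?case
    using refines_sym_act_eq_or_heads[OF occ_out_later(3)] occ_out_later.IH by auto
qed

lemma refines_act: "refines W V \<Longrightarrow> act W = act V"
  using occurs_act_refines unfolding act_def by blast

lemma refines_pre1_prefixI:
  assumes "all_overtake C (iact x)" and "item_refines x x'" and "refines W (prefix C V)"
  shows "refines (pre1 x W) (prefix C (pre1 x' V))"
proof (cases "C = []")
  case True
  with assms show ?thesis
    by (cases x; cases x') (auto intro: ref_in ref_out)
next
  case False
  have "act W = act (prefix C V)"
    using assms(3) by (rule refines_act)
  with False assms show ?thesis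
    by (cases x; cases x') (auto simp: is_A_iff is_B_iff simp del: act_prefix intro!: ref_A ref_B)
qed

lemma refines_pre1_iff:
  "refines (pre1 x W) U \<longleftrightarrow>
    (\<exists>C x' V. U = prefix C (pre1 x' V) \<and> all_overtake C (iact x) \<and> item_refines x x' \<and>
      refines W (prefix C V))"
proof
  assume R: "refines (pre1 x W) U"
  show "\<exists>C x' V. U = prefix C (pre1 x' V) \<and> all_overtake C (iact x) \<and> item_refines x x' \<and>
      refines W (prefix C V)"
  proof (cases x)
    case (IIn p l S)
    from R[unfolded IIn pre1.simps] show ?thesis
    proof cases
      case (ref_in S' V)
      then show ?thesis
        using IIn by (intro exI[of _ "[]"] exI[of _ "IIn p l S'"]) (auto simp: all_overtake_def)
    next
      case (ref_A A S' V)
      then show ?thesis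
        using IIn by (intro exI[of _ A] exI[of _ "IIn p l S'"]) (auto simp: is_A_iff)
    qed
  next
    case (IOut p l S)
    from R[unfolded IOut pre1.simps] show ?thesis
    proof cases
      case (ref_out S' V)
      then show ?thesis
        using IOut by (intro exI[of _ "[]"] exI[of _ "IOut p l S'"]) (auto simp: all_overtake_def)
    next
      case (ref_B B S' V)
      then show ?thesis
        using IOut by (intro exI[of _ B] exI[of _ "IOut p l S'"]) (auto simp: is_B_iff)
    qed
  qed
qed (auto intro: refines_pre1_prefixI)

lemma refines_prefix_pre1_inv:
  assumes "all_overtake C (iact x)" and "refines (prefix C (pre1 x W)) U"
  shows "\<exists>C' x' V. U = prefix C' (pre1 x' V) \<and> all_overtake C' (iact x) \<and> item_refines x x' \<and>
    refines (prefix C W) (prefix C' V)"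
  using assms
proof (induction C arbitrary: U)
  case Nil
  then show ?case
    by (simp add: refines_pre1_iff)
next
  case (Cons y C)
  from Cons.prems(1) have y: "overtakes (iact y) (iact x)" and C: "all_overtake C (iact x)"
    by (simp_all add: all_overtake_def)
  from Cons.prems(2) obtain D y' V where U: "U = prefix D (pre1 y' V)"
    and D: "all_overtake D (iact y)" and yy': "item_refines y y'"
    and R: "refines (prefix C (pre1 x W)) (prefix D V)"
    by (auto simp: refines_pre1_iff)
  from Cons.IH[OF C R] obtain C3 x3 V3 where DV: "prefix D V = prefix C3 (pre1 x3 V3)"
    and C3: "all_overtake C3 (iact x)" and xx3: "item_refines x x3"
    and R3: "refines (prefix C W) (prefix C3 V3)"
    by blast
  from prefix_eq_prefix_pre1D[OF DV] show ?case
  proof (elim disjE exE conjE)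
    fix zs
    assume D_split: "D = C3 @ x3 # zs" and V3: "V3 = prefix zs V"
    have "refines (pre1 y (prefix C W)) (prefix (C3 @ zs) (pre1 y' V))"
      using D yy' R3 by (intro refines_pre1_prefixI) (auto simp: D_split V3 all_overtake_def)
    then show ?thesis
      using U C3 xx3 D_split by (intro exI[of _ C3] exI[of _ x3] exI[of _ "prefix zs (pre1 y' V)"]) auto
  next
    fix zs
    assume C3_split: "C3 = D @ zs" and V: "V = prefix zs (pre1 x3 V3)"
    have "refines (pre1 y (prefix C W)) (prefix D (pre1 y' (prefix zs V3)))"
      using D yy' R3 C3_split by (intro refines_pre1_prefixI) auto
    moreover have "all_overtake (D @ y' # zs) (iact x)"
      using C3 C3_split y item_refines_iact[OF yy'] by (simp add: all_overtake_def)
    ultimately show ?thesis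
      using U V xx3 by (intro exI[of _ "D @ y' # zs"] exI[of _ x3] exI[of _ V3]) auto
  qed
qed

lemma refines_coinduct_pre1:
  assumes "R W U"
    and step: "\<And>W U. R W U \<Longrightarrow> W = End \<and> U = End \<or>
      (\<exists>x W' C x' V. W = pre1 x W' \<and> U = prefix C (pre1 x' V) \<and> all_overtake C (iact x) \<and>
        item_refines x x' \<and> act W' = act (prefix C V) \<and> R W' (prefix C V))"
  shows "refines W U"
  using assms(1)
proof (coinduction arbitrary: W U rule: refines.coinduct)
  case (refines W U)
  from step[OF this] show ?case
  proof (elim disjE exE conjE)
    fix x W' C x' V
    assume "W = pre1 x W'" "U = prefix C (pre1 x' V)" "all_overtake C (iact x)"
      "item_refines x x'" "act W' = act (prefix C V)" "R W' (prefix C V)"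
    then show ?case
      by (cases x; cases x'; cases "C = []"; simp add: is_A_iff is_B_iff del: act_prefix; blast)
  qed simp
qed

lemma refines_refl: "refines W W"
proof (rule refines_coinduct_pre1[where R = "(=)"])
  fix W U :: "('p, 'l) siso"
  assume "W = U"
  from siso_End_or_pre1[of W] show "W = End \<and> U = End \<or>
      (\<exists>x W' C x' V. W = pre1 x W' \<and> U = prefix C (pre1 x' V) \<and> all_overtake C (iact x) \<and>
        item_refines x x' \<and> act W' = act (prefix C V) \<and> W' = prefix C V)"
  proof (elim disjE exE)
    fix x W'
    assume "W = pre1 x W'"
    with \<open>W = U\<close> show ?thesis
      by (intro disjI2 exI[of _ x] exI[of _ W'] exI[of _ "[]"] exI[of _ x] exI[of _ W'])
        (simp add: all_overtake_def item_refines_refl)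
  qed (simp add: \<open>W = U\<close>)
qed simp

lemma refines_trans:
  assumes "refines W U" and "refines U V"
  shows "refines W V"
proof (rule refines_coinduct_pre1[where R = "\<lambda>W V. \<exists>U. refines W U \<and> refines U V"])
  show "\<exists>U. refines W U \<and> refines U V"
    using assms by blast
next
  fix W V :: "('p, 'l) siso"
  assume "\<exists>U. refines W U \<and> refines U V"
  then obtain U where WU: "refines W U" and UV: "refines U V"
    by blast
  consider "W = End" | x W' where "W = pre1 x W'"
    using siso_End_or_pre1 by blast
  then show "W = End \<and> V = End \<or>
      (\<exists>x W' C x' V'. W = pre1 x W' \<and> V = prefix C (pre1 x' V') \<and> all_overtake C (iact x) \<and>
        item_refines x x' \<and> act W' = act (prefix C V') \<and>
        (\<exists>U. refines W' U \<and> refines U (prefix C V')))"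
  proof cases
    case 1
    with WU UV show ?thesis
      by (auto elim: refines.cases)
  next
    case (2 x W')
    with WU obtain C y U' where U: "U = prefix C (pre1 y U')" and C: "all_overtake C (iact x)"
      and xy: "item_refines x y" and R1: "refines W' (prefix C U')"
      by (auto simp: refines_pre1_iff)
    from C UV U refines_prefix_pre1_inv[of C y U' V] obtain C' z V'
      where V: "V = prefix C' (pre1 z V')" and C': "all_overtake C' (iact x)"
        and yz: "item_refines y z" and R2: "refines (prefix C U') (prefix C' V')"
      by (auto simp: item_refines_iact[OF xy])
    have "act W' = act (prefix C' V')"
      using refines_act[OF R1] refines_act[OF R2] by simp
    then show ?thesis
      using 2 V C' item_refines_trans[OF xy yz] R1 R2 by blast
  qed
qed

theorem lemma3p3:
  shows "reflp (refines :: ('p, 'l) siso \<Rightarrow> ('p, 'l) siso \<Rightarrow> bool) \<and>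
         transp (refines :: ('p, 'l) siso \<Rightarrow> ('p, 'l) siso \<Rightarrow> bool)"
  by (auto intro: reflpI transpI refines_refl refines_trans)

end
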